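(* Let $K$ be a non-Archimedean local field, $n\ge 2$, $\alpha>0$, and let $G\subset K^n$ with $0\notin G$. Let $u\in\mathcal{H}_\infty(K^n)$ be $\alpha$-harmonic on $G$, i.e. $(D^{\alpha,n}u)(x)=0$ for all $x\in G$. Then the function $\mathcal{K}u$ is $\alpha$-harmonic on the set $\{\mathcal{J}(x): x\in G\}$, i.e. $(D^{\alpha,n}(\mathcal{K}u))(y)=0$ for all $y\in\mathcal{J}(G)$.
   Context: $K$ is a non-Archimedean local field with normalized absolute value $|\cdot|_K$, ring of integers $O=\{|x|_K\le 1\}$, maximal ideal $P=\{|x|_K<1\}$, residue field cardinality $q=\operatorname{card}(O/P)$. For $z=(z_1,\dots,z_n)\in K^n$, $\|z\|_{K^n}=\max_{1\le j\le n}|z_j|_K$; $dy$ denotes Haar measure on $K^n$ normalized so that the unit ball has measure $1$. The Vladimirov–Taibleson operator is \[ \big(D^{\alpha,n}u\big)(x)=c_{n,\alpha}\int_{K^n}\frac{u(x)-u(y)}{\|x-y\|_{K^n}^{n+\alpha}}\,dy,\qquad c_{n,\alpha}=\frac{q-1}{1-q^{-\alpha-n}}. \] Let $L$ be the unramified extension of $K$ of degree $n$, and fix a canonical basis of $L$ over $K$, i.e. a set of representatives in the ring of integers of $L$ of a basis of the residue field of $L$ over the residue field of $K$. Let $\mathcal{U}\colon K^n\to L$ be the $K$-linear isomorphism sending $(x_1,\dots,x_n)$ to the element of $L$ with these coordinates in the canonical basis. The inversion is $\mathcal{J}=\mathcal{U}^{-1}\circ\Delta\circ\mathcal{U}$ on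 $K^n\setminus\{0\}$, where $\Delta(x)=1/x$ in $L$. The non-Archimedean Kelvin transformation is $(\mathcal{K}u)(x)=\|x\|_{K^n}^{\alpha-n}u(\mathcal{J}(x))$ for $0\ne x\in K^n$. $\mathcal{H}_\infty(K^n)=\bigcap_{\ell\ge0}\mathcal{H}_\ell(K^n)$, where $\mathcal{H}_\ell(K^n)$ is the completion of the space $\mathcal{D}(K^n)$ of locally constant compactly supported complex functions with respect to $\langle\varphi,\psi\rangle_\ell=\int_{K^n}\max(1,\|\xi\|_{K^n})^\ell\,\widehat\varphi(\xi)\overline{\widehat\psi(\xi)}\,d\xi$ ($\widehat{\cdot}$ the Fourier transform with respect to a fixed rank-zero additive character). *)

theory Defs
  imports "HOL-Analysis.Analysis"
begin

definition nonarch_local_field :: "('k::field \<Rightarrow> real) \<Rightarrow> nat \<Rightarrow> bool" where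
  "nonarch_local_field absK q \<longleftrightarrow>
     (\<forall>x. absK x \<ge> 0) \<and> (\<forall>x. absK x = 0 \<longleftrightarrow> x = 0) \<and>
     (\<forall>x y. absK (x * y) = absK x * absK y) \<and>
     (\<forall>x y. absK (x + y) \<le> max (absK x) (absK y)) \<and>
     \<comment> \<open>normalized: the value group is exactly q^Z\<close>
     {absK x | x. x \<noteq> 0} = {real q powr real_of_int k | k. True} \<and>
     \<comment> \<open>residue field O/P is finite of cardinality q\<close>
     finite ({x. absK x \<le> 1} // {(x, y). absK x \<le> 1 \<and> absK y \<le> 1 \<and> absK (x - y) < 1}) \<and>
     card ({x. absK x \<le> 1} // {(x, y). absK x \<le> 1 \<and> absK y \<le> 1 \<and> absK (x - y) < 1}) = q \<and>
     \<comment> \<open>completeness\<close>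
     (\<forall>s :: nat \<Rightarrow> 'k. (\<forall>\<epsilon>>0. \<exists>N. \<forall>m\<ge>N. \<forall>k\<ge>N. absK (s m - s k) < \<epsilon>) \<longrightarrow>
        (\<exists>l. \<forall>\<epsilon>>0. \<exists>N. \<forall>m\<ge>N. absK (s m - l) < \<epsilon>))"

definition normK :: "('k::field \<Rightarrow> real) \<Rightarrow> 'k ^ 'n \<Rightarrow> real" where
  "normK absK x = (MAX i \<in> UNIV. absK (x $ i))"

definition haar_Kn :: "('k::field \<Rightarrow> real) \<Rightarrow> ('k ^ 'n) measure \<Rightarrow> bool" where
  "haar_Kn absK M \<longleftrightarrow>
     space M = UNIV \<and>
     sets M = sigma_sets UNIV {{y. normK absK (y - a) \<le> r} | a r. True} \<and>
     (\<forall>a A. A \<in> sets M \<longrightarrow> emeasure M ((+) a ` A) = emeasure M A) \<and>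
     emeasure M {x. normK absK x \<le> 1} = 1"

text \<open>Additive character of rank zero: trivial on O, nontrivial on P^{-1}.\<close>
definition rank_zero_char :: "('k::field \<Rightarrow> real) \<Rightarrow> nat \<Rightarrow> ('k \<Rightarrow> complex) \<Rightarrow> bool" where
  "rank_zero_char absK q chi \<longleftrightarrow>
     (\<forall>x y. chi (x + y) = chi x * chi y) \<and> (\<forall>x. cmod (chi x) = 1) \<and>
     (\<forall>x. absK x \<le> 1 \<longrightarrow> chi x = 1) \<and> (\<exists>x. absK x \<le> real q \<and> chi x \<noteq> 1)"

definition fourierK :: "('k ^ 'n) measure \<Rightarrow> ('k::field \<Rightarrow> complex) \<Rightarrow> ('k ^ 'n \<Rightarrow> complex) \<Rightarrow> 'k ^ 'n \<Rightarrow> complex" where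
  "fourierK M chi \<phi> \<xi> = (\<integral>x. \<phi> x * chi (\<Sum>i\<in>UNIV. \<xi> $ i * x $ i) \<partial>M)"

definition test_fun :: "('k::field \<Rightarrow> real) \<Rightarrow> ('k ^ 'n \<Rightarrow> complex) \<Rightarrow> bool" where
  "test_fun absK \<phi> \<longleftrightarrow>
     (\<exists>r>0. \<forall>x y. normK absK (x - y) < r \<longrightarrow> \<phi> x = \<phi> y) \<and>
     (\<exists>R. \<forall>x. normK absK x > R \<longrightarrow> \<phi> x = 0)"

text \<open>u belongs to H_infinity: it is (the pointwise representative of) the limit of a
  sequence of test functions that is Cauchy for every norm ||.||_l, l >= 0.\<close>
definition H_infty :: "('k::field \<Rightarrow> real) \<Rightarrow> ('k ^ 'n) measure \<Rightarrow> ('k \<Rightarrow> complex) \<Rightarrow> ('k ^ 'n \<Rightarrow> complex) \<Rightarrow> bool" where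
  "H_infty absK M chi u \<longleftrightarrow>
     (\<exists>\<phi> :: nat \<Rightarrow> 'k ^ 'n \<Rightarrow> complex.
        (\<forall>k. test_fun absK (\<phi> k)) \<and>
        (\<forall>l::real. l \<ge> 0 \<longrightarrow> (\<forall>\<epsilon>>0. \<exists>N. \<forall>j\<ge>N. \<forall>k\<ge>N.
            (\<integral>\<xi>. max 1 (normK absK \<xi>) powr l *
                 (cmod (fourierK M chi (\<lambda>x. \<phi> j x - \<phi> k x) \<xi>))\<^sup>2 \<partial>M) < \<epsilon>)) \<and>
        (\<forall>x. (\<lambda>k. \<phi> k x) \<longlonglongrightarrow> u x))"

definition VT_op :: "('k::field \<Rightarrow> real) \<Rightarrow> nat \<Rightarrow> ('k ^ 'n) measure \<Rightarrow> real \<Rightarrow> ('k ^ 'n \<Rightarrow> complex) \<Rightarrow> 'k ^ 'n \<Rightarrow> complex" where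
  "VT_op absK q M \<alpha> u x =
     complex_of_real ((real q - 1) / (1 - real q powr (- \<alpha> - real CARD('n)))) *
     (\<integral>y. (u x - u y) / complex_of_real (normK absK (x - y) powr (real CARD('n) + \<alpha>)) \<partial>M)"

definition unram_canonical_basis ::
  "('k::field \<Rightarrow> real) \<Rightarrow> ('l::field \<Rightarrow> real) \<Rightarrow> ('k \<Rightarrow> 'l) \<Rightarrow> ('n::finite \<Rightarrow> 'l) \<Rightarrow> bool" where
  "unram_canonical_basis absK absL \<iota> e \<longleftrightarrow>
     \<comment> \<open>\<iota> : K \<rightarrow> L field embedding\<close>
     (\<forall>a b. \<iota> (a + b) = \<iota> a + \<iota> b) \<and> (\<forall>a b. \<iota> (a * b) = \<iota> a * \<iota> b) \<and> \<iota> 1 = 1 \<and>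
     \<comment> \<open>absolute value on L extending that of K\<close>
     (\<forall>x. absL x \<ge> 0) \<and> (\<forall>x. absL x = 0 \<longleftrightarrow> x = 0) \<and>
     (\<forall>x y. absL (x * y) = absL x * absL y) \<and>
     (\<forall>x y. absL (x + y) \<le> max (absL x) (absL y)) \<and>
     (\<forall>a. absL (\<iota> a) = absK a) \<and>
     \<comment> \<open>e is a K-basis of L (so [L:K] = card n)\<close>
     bij (\<lambda>x :: 'k ^ 'n. \<Sum>i\<in>UNIV. \<iota> (x $ i) * e i) \<and>
     \<comment> \<open>e lies in O_L and its residues form a basis of the residue field of L over that of K\<close>
     (\<forall>i. absL (e i) \<le> 1) \<and>
     (\<forall>y. absL y \<le> 1 \<longrightarrow> (\<exists>a :: 'k ^ 'n. (\<forall>i. absK (a $ i) \<le> 1) \<and>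
          absL (y - (\<Sum>i\<in>UNIV. \<iota> (a $ i) * e i)) < 1)) \<and>
     (\<forall>a :: 'k ^ 'n. (\<forall>i. absK (a $ i) \<le> 1) \<and> absL (\<Sum>i\<in>UNIV. \<iota> (a $ i) * e i) < 1 \<longrightarrow>
          (\<forall>i. absK (a $ i) < 1))"

definition U_map :: "('k::field \<Rightarrow> 'l::field) \<Rightarrow> ('n::finite \<Rightarrow> 'l) \<Rightarrow> 'k ^ 'n \<Rightarrow> 'l" where
  "U_map \<iota> e x = (\<Sum>i\<in>UNIV. \<iota> (x $ i) * e i)"

definition J_map :: "('k::field \<Rightarrow> 'l::field) \<Rightarrow> ('n::finite \<Rightarrow> 'l) \<Rightarrow> 'k ^ 'n \<Rightarrow> 'k ^ 'n" where
  "J_map \<iota> e x = inv (U_map \<iota> e) (inverse (U_map \<iota> e x))"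

text \<open>Kelvin transform; its value at 0 (where it is undefined) is set to 0.\<close>
definition kelvin :: "('k::field \<Rightarrow> real) \<Rightarrow> ('k \<Rightarrow> 'l::field) \<Rightarrow> ('n::finite \<Rightarrow> 'l) \<Rightarrow> real \<Rightarrow>
    ('k ^ 'n \<Rightarrow> complex) \<Rightarrow> 'k ^ 'n \<Rightarrow> complex" where
  "kelvin absK \<iota> e \<alpha> u x = (if x = 0 then 0 else
     complex_of_real (normK absK x powr (\<alpha> - real CARD('n))) * u (J_map \<iota> e x))"

end

theory Submission
  imports Defs
begin

(* Write U for the K-linear bijection of K^n onto the unramified extension L given by the canonical
   basis.  Independence of the residues of the basis makes U an isometry from the max norm to the
   absolute value of L, so the inversion J = U^-1 o (1/-) o U satisfies ||J x|| = 1/||x|| and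
   ||J x - J w|| = ||x - w|| / (||x|| ||w||).  Hence J maps every ball either to a ball or to the
   complement of a ball around 0, and comparing Haar measures (a ball of radius q^k has measure
   q^(nk)) shows that J transports the measure ||w||^(-2n) dw to Haar measure.  Substituting z = J w
   in the integral defining D^alpha (Kelvin u) (J x) turns its integrand into ||x||^(n+alpha) times
   the integrand of D^alpha u at x, minus ||x||^(2n) u(x) times the integrand of D^alpha applied to
   the Riesz kernel ||w||^(alpha-n) at x.  The latter is integrable with integral 0: the spheres of
   radius q^(m-j) and q^(m+j) around ||x|| = q^m contribute opposite terms of geometric series. *)

lemma powr_diff_divide_mult:
  fixes x :: real
  assumes "x > 0"
  shows "(x powr a - x powr b) / x powr c * (x powr e * K) = (x powr (a + e - c) - x powr (b + e - c)) * K"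
  using assms by (simp add: powr_add powr_diff field_simps)

lemma summable_powr_linear:
  fixes x :: real
  assumes "x > 1" "s > 0"
  shows "summable (\<lambda>i. x powr (c - real (Suc i) * s))"
proof -
  have "x powr (- s) < x powr 0"
    using assms by (intro powr_less_mono) auto
  then have "summable (\<lambda>i. x powr (c - s) * (x powr (- s)) ^ i)"
    using assms by (intro summable_mult summable_geometric) simp
  moreover have "x powr (c - real (Suc i) * s) = x powr (c - s) * (x powr (- s)) ^ i" for i
    using assms by (simp add: powr_power powr_add[symmetric] algebra_simps)
  ultimately show ?thesis
    by simp
qed

text \<open>The integrand of \<open>D\<^sup>\<alpha>\<close> applied to the Kelvin transform, after the substitution \<open>z = J w\<close>,
  with \<open>a = \<parallel>x\<parallel>\<close>, \<open>b = \<parallel>w\<parallel>\<close>, \<open>c = \<parallel>x - w\<parallel>\<close> and \<open>d = n\<close>.\<close>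

lemma kelvin_kernel_identity:
  fixes a b c d \<alpha> :: real and X Y :: complex
  assumes a: "a > 0" and b: "b > 0" and c: "c > 0"
  shows "b powr (- 2 * d) *\<^sub>R ((of_real (a powr (d - \<alpha>)) * X - of_real (b powr (d - \<alpha>)) * Y)
           / of_real ((c / (a * b)) powr (d + \<alpha>)))
    = of_real (a powr (d + \<alpha>)) * ((X - Y) / of_real (c powr (d + \<alpha>)))
      - of_real (a powr (2 * d)) * X * of_real ((a powr (\<alpha> - d) - b powr (\<alpha> - d)) / c powr (d + \<alpha>))"
proof -
  have ea: "a powr (d - \<alpha>) * a powr (d + \<alpha>) = a powr (2 * d)" "a powr (2 * d) * a powr (\<alpha> - d) = a powr (d + \<alpha>)"
    by (simp_all add: powr_add[symmetric] algebra_simps)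
  have eb: "b powr (- 2 * d) * b powr (d + \<alpha>) = b powr (\<alpha> - d)" "b powr (- 2 * d) * b powr (d - \<alpha>) * b powr (d + \<alpha>) = 1"
    using b by (simp_all add: powr_add[symmetric] algebra_simps)
  have split: "(c / (a * b)) powr (d + \<alpha>) = c powr (d + \<alpha>) / (a powr (d + \<alpha>) * b powr (d + \<alpha>))"
    using a b c by (simp add: powr_divide powr_mult)
  have "b powr (- 2 * d) *\<^sub>R ((of_real (a powr (d - \<alpha>)) * X - of_real (b powr (d - \<alpha>)) * Y)
           / of_real ((c / (a * b)) powr (d + \<alpha>)))
      = of_real ((a powr (d - \<alpha>) * a powr (d + \<alpha>)) * (b powr (- 2 * d) * b powr (d + \<alpha>)) / c powr (d + \<alpha>)) * X
        - of_real (a powr (d + \<alpha>) * (b powr (- 2 * d) * b powr (d - \<alpha>) * b powr (d + \<alpha>)) / c powr (d + \<alpha>)) * Y"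
    unfolding split using a b c by (simp add: scaleR_conv_of_real field_simps)
  also have "\<dots> = of_real (a powr (2 * d) * b powr (\<alpha> - d) / c powr (d + \<alpha>)) * X
        - of_real (a powr (d + \<alpha>) / c powr (d + \<alpha>)) * Y"
    by (simp only: ea eb mult_1_right)
  also have "\<dots> = of_real (a powr (d + \<alpha>)) * ((X - Y) / of_real (c powr (d + \<alpha>)))
      - of_real (a powr (2 * d)) * X * of_real ((a powr (\<alpha> - d) - b powr (\<alpha> - d)) / c powr (d + \<alpha>))"
    using c ea(2)[symmetric] by (simp add: field_simps)
  finally show ?thesis .
qed

lemma integral_diff_null_integral:
  fixes f g :: "'a \<Rightarrow> 'b::{banach, second_countable_topology}"
  assumes "has_bochner_integral M g 0"
  shows "(\<integral>x. f x - g x \<partial>M) = integral\<^sup>L M f"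
proof (cases "integrable M f")
  case False
  have "\<not> integrable M (\<lambda>x. f x - g x)"
  proof
    assume "integrable M (\<lambda>x. f x - g x)"
    then have "integrable M (\<lambda>x. (f x - g x) + g x)"
      using assms by (intro Bochner_Integration.integrable_add) (simp_all add: has_bochner_integral_iff)
    with False show False
      by simp
  qed
  with False show ?thesis
    by (simp add: not_integrable_integral_eq)
qed (use assms in \<open>simp add: has_bochner_integral_iff\<close>)


section \<open>Ultrametric absolute values and the max norm\<close>

locale ultrametric_abs =
  fixes absv :: "'a::field \<Rightarrow> real"
  assumes absv_nonneg: "absv x \<ge> 0"
    and absv_eq_0_iff [simp]: "absv x = 0 \<longleftrightarrow> x = 0"
    and absv_mult: "absv (x * y) = absv x * absv y"
    and absv_add_le_max: "absv (x + y) \<le> max (absv x) (absv y)"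
begin

lemma absv_0 [simp]: "absv 0 = 0"
  by simp

lemma absv_1 [simp]: "absv 1 = 1"
  using absv_mult[of 1 1] absv_eq_0_iff[of 1] by (metis mult_cancel_left1 one_neq_zero)

lemma absv_minus [simp]: "absv (- x) = absv x"
proof -
  have "(absv (-1) - 1) * (absv (-1) + 1) = 0"
    using absv_mult[of "-1" "-1"] by (simp add: algebra_simps)
  moreover have "absv (-1) + 1 \<noteq> 0"
    using absv_nonneg[of "-1"] by linarith
  ultimately show ?thesis
    using absv_mult[of "-1" x] by simp
qed

lemma absv_minus_commute: "absv (x - y) = absv (y - x)"
  by (metis absv_minus minus_diff_eq)

lemma absv_inverse: "absv (inverse x) = 1 / absv x"
  by (cases "x = 0") (use absv_mult[of "inverse x" x] in \<open>auto simp: eq_divide_eq\<close>)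

lemma absv_sum_le: "finite S \<Longrightarrow> 0 \<le> t \<Longrightarrow> (\<And>i. i \<in> S \<Longrightarrow> absv (f i) \<le> t) \<Longrightarrow> absv (sum f S) \<le> t"
proof (induction S rule: finite_induct)
  case (insert x F)
  then have "absv (f x) \<le> t" "absv (sum f F) \<le> t"
    by auto
  then show ?case
    using insert(1,2) absv_add_le_max[of "f x" "sum f F"] by simp
qed simp

abbreviation N :: "'a ^ 'n \<Rightarrow> real" where
  "N \<equiv> normK absv"

lemma normK_le_iff: "N v \<le> t \<longleftrightarrow> (\<forall>i. absv (v $ i) \<le> t)"
  unfolding normK_def by (simp add: Max_le_iff)

lemma absv_component_le_normK: "absv (v $ i) \<le> N v"
  unfolding normK_def by (intro Max_ge) auto

lemma normK_attained: "\<exists>i. N v = absv (v $ i)"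
proof -
  have "(MAX i\<in>UNIV. absv (v $ i)) \<in> (\<lambda>i. absv (v $ i)) ` UNIV"
    by (intro Max_in) auto
  then show ?thesis
    unfolding normK_def by (metis imageE)
qed

lemma normK_nonneg: "N v \<ge> 0"
  using absv_component_le_normK absv_nonneg order_trans by blast

lemma normK_eq_0_iff [simp]: "N v = 0 \<longleftrightarrow> v = 0"
proof
  assume "N v = 0"
  then have "absv (v $ i) = 0" for i
    using absv_component_le_normK[of v i] absv_nonneg[of "v $ i"] by linarith
  then show "v = 0"
    by (simp add: vec_eq_iff)
qed (simp add: normK_def)

lemma normK_0 [simp]: "N 0 = 0"
  by simp

lemma normK_pos: "v \<noteq> 0 \<Longrightarrow> N v > 0"
  using normK_nonneg[of v] normK_eq_0_iff[of v] by linarith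

lemma normK_add_le_max: "N (v + w) \<le> max (N v) (N w)"
  unfolding normK_le_iff
proof
  fix i
  have "absv ((v + w) $ i) \<le> max (absv (v $ i)) (absv (w $ i))"
    using absv_add_le_max by simp
  also have "\<dots> \<le> max (N v) (N w)"
    using absv_component_le_normK by (rule max.mono) (rule absv_component_le_normK)
  finally show "absv ((v + w) $ i) \<le> max (N v) (N w)" .
qed

lemma normK_minus [simp]: "N (- v) = N v"
  unfolding normK_def by simp

lemma normK_minus_commute: "N (v - w) = N (w - v)"
  by (metis normK_minus minus_diff_eq)

lemma normK_diff_le_max: "N (v - w) \<le> max (N v) (N w)"
  using normK_add_le_max[of v "- w"] by simp

lemma normK_smult: "N (c *s v) = absv c * N v"
proof (rule antisym)
  show "N (c *s v) \<le> absv c * N v"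
    unfolding normK_le_iff using absv_component_le_normK[of v] absv_nonneg[of c]
    by (simp add: absv_mult mult_left_mono)
  obtain i where "N v = absv (v $ i)"
    using normK_attained by blast
  then show "absv c * N v \<le> N (c *s v)"
    using absv_component_le_normK[of "c *s v" i] by (simp add: absv_mult)
qed

lemma normK_add_eq_of_less: "N w < N v \<Longrightarrow> N (v + w) = N v"
  using normK_add_le_max[of v w] normK_add_le_max[of "v + w" "- w"] by auto

lemma normK_diff_eq_max: "N w \<noteq> N v \<Longrightarrow> N (v - w) = max (N v) (N w)"
  using normK_add_eq_of_less[of "- w" v] normK_add_eq_of_less[of v "- w"]
  by (cases "N w < N v") (auto simp: max_def add.commute)

definition kball :: "'a ^ 'n \<Rightarrow> real \<Rightarrow> ('a ^ 'n) set" where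
  "kball a r = {y. N (y - a) \<le> r}"

lemma kball_recentre:
  assumes "c \<in> kball a r"
  shows "kball a r = kball c r"
proof -
  have "N (c - a) \<le> r" "N (a - c) \<le> r"
    using assms normK_minus_commute[of a c] by (auto simp: kball_def)
  then have "N (y - c) \<le> r \<longleftrightarrow> N (y - a) \<le> r" for y
    using normK_add_le_max[of "y - c" "c - a"] normK_add_le_max[of "y - a" "a - c"] by auto
  then show ?thesis
    by (auto simp: kball_def)
qed

lemma kball_translate: "kball a r = (+) a ` kball 0 r"
proof -
  have "y \<in> (+) a ` kball 0 r" if "y \<in> kball a r" for y
    using that by (intro image_eqI[of _ _ "y - a"]) (auto simp: kball_def)
  then show ?thesis
    by (auto simp: kball_def)
qed

lemma kball_empty: "r < 0 \<Longrightarrow> kball a r = {}"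
  unfolding kball_def using normK_nonneg by (auto simp: not_le intro: less_le_trans)

lemma kball_0: "kball a 0 = {a}"
proof -
  have "N (y - a) \<le> 0 \<longleftrightarrow> y = a" for y
    using normK_nonneg[of "y - a"] normK_eq_0_iff[of "y - a"] by auto
  then show ?thesis
    unfolding kball_def by blast
qed

lemma kball_Int: "\<exists>c s. kball a r \<inter> kball b t = kball c s"
proof (cases "kball a r \<inter> kball b t = {}")
  case True
  then show ?thesis
    using kball_empty[of "-1" a] by auto
next
  case False
  then obtain c where "c \<in> kball a r" "c \<in> kball b t"
    by blast
  then have "kball a r \<inter> kball b t = kball c (min r t)"
    using kball_recentre by (auto simp: kball_def)
  then show ?thesis
    by blast
qed

end

section \<open>Value group and residue field of a local field\<close>

locale local_field =
  fixes absK :: "'k::field \<Rightarrow> real" and q :: nat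
  assumes local_field: "nonarch_local_field absK q"

sublocale local_field \<subseteq> ultrametric_abs absK
  using local_field unfolding nonarch_local_field_def by unfold_locales blast+

context local_field
begin

definition qpow :: "int \<Rightarrow> real" where
  "qpow k = real q powr real_of_int k"

lemma value_group: "{absK x | x. x \<noteq> 0} = {qpow k | k. True}"
  using local_field unfolding nonarch_local_field_def qpow_def by blast

lemma absK_eq_qpow: "x \<noteq> 0 \<Longrightarrow> \<exists>k. absK x = qpow k"
  using value_group by blast

lemma ex_absK_eq_qpow: "\<exists>c. absK c = qpow k"
proof -
  have "qpow k \<in> {absK x | x. x \<noteq> 0}"
    unfolding value_group by blast
  then show ?thesis
    by auto
qed

definition residue_rel :: "('k \<times> 'k) set" where
  "residue_rel = {(x, y). absK x \<le> 1 \<and> absK y \<le> 1 \<and> absK (x - y) < 1}"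

lemma residue_field_card: "finite ({x. absK x \<le> 1} // residue_rel)" "card ({x. absK x \<le> 1} // residue_rel) = q"
  using local_field unfolding nonarch_local_field_def residue_rel_def by blast+

lemma equiv_residue_rel: "equiv {x. absK x \<le> 1} residue_rel"
proof (rule equivI)
  show "trans residue_rel"
    unfolding trans_def residue_rel_def
  proof clarsimp
    fix x y z
    assume "absK (x - y) < 1" "absK (y - z) < 1"
    then show "absK (x - z) < 1"
      using absv_add_le_max[of "x - y" "y - z"] by simp
  qed
qed (auto simp: refl_on_def sym_def residue_rel_def absv_minus_commute)

definition residue_reps :: "'k set" where
  "residue_reps = (\<lambda>C. SOME x. x \<in> C) ` ({x. absK x \<le> 1} // residue_rel)"

lemma some_in_residue_class:
  assumes "C \<in> {x. absK x \<le> 1} // residue_rel"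
  shows "(SOME x. x \<in> C) \<in> C"
proof -
  obtain x where "x \<in> C"
    using in_quotient_imp_non_empty[OF equiv_residue_rel assms] by blast
  then show ?thesis
    by (rule someI)
qed

lemma residue_reps_le_1:
  assumes "\<rho> \<in> residue_reps"
  shows "absK \<rho> \<le> 1"
proof -
  obtain C where C: "C \<in> {x. absK x \<le> 1} // residue_rel" and \<rho>: "\<rho> = (SOME x. x \<in> C)"
    using assms unfolding residue_reps_def by blast
  have "\<rho> \<in> C"
    unfolding \<rho> by (rule some_in_residue_class[OF C])
  with in_quotient_imp_subset[OF equiv_residue_rel C] show ?thesis
    by blast
qed

lemma residue_class_eq:
  assumes C: "C \<in> {x. absK x \<le> 1} // residue_rel" and C': "C' \<in> {x. absK x \<le> 1} // residue_rel"
    and close: "absK ((SOME x. x \<in> C) - (SOME x. x \<in> C')) < 1"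
  shows "C = C'"
proof -
  have "(SOME x. x \<in> C) \<in> residue_reps" "(SOME x. x \<in> C') \<in> residue_reps"
    unfolding residue_reps_def by (rule imageI[OF C], rule imageI[OF C'])
  then have "((SOME x. x \<in> C), (SOME x. x \<in> C')) \<in> residue_rel"
    using close residue_reps_le_1 unfolding residue_rel_def by blast
  then show ?thesis
    using quotient_eq_iff[OF equiv_residue_rel C C' some_in_residue_class[OF C] some_in_residue_class[OF C']]
    by blast
qed

lemma residue_reps_unique:
  assumes "\<rho> \<in> residue_reps" "\<rho>' \<in> residue_reps" "absK (\<rho> - \<rho>') < 1"
  shows "\<rho> = \<rho>'"
proof -
  obtain C C' where "C \<in> {x. absK x \<le> 1} // residue_rel" "\<rho> = (SOME x. x \<in> C)"
    and "C' \<in> {x. absK x \<le> 1} // residue_rel" "\<rho>' = (SOME x. x \<in> C')"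
    using assms(1,2) unfolding residue_reps_def by blast
  with assms(3) show ?thesis
    using residue_class_eq by blast
qed

lemma finite_residue_reps: "finite residue_reps"
  and card_residue_reps: "card residue_reps = q"
proof -
  have "inj_on (\<lambda>C. SOME x. x \<in> C) ({x. absK x \<le> 1} // residue_rel)"
  proof (rule inj_onI)
    fix C C' assume C: "C \<in> {x. absK x \<le> 1} // residue_rel" and C': "C' \<in> {x. absK x \<le> 1} // residue_rel"
      and eq: "(SOME x. x \<in> C) = (SOME x. x \<in> C')"
    show "C = C'"
      by (rule residue_class_eq[OF C C']) (simp only: eq diff_self absv_0 zero_less_one)
  qed
  then show "finite residue_reps" "card residue_reps = q"
    unfolding residue_reps_def using residue_field_card card_image by auto
qed

lemma residue_reps_cover:
  assumes "absK x \<le> 1"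
  shows "\<exists>\<rho>\<in>residue_reps. absK (x - \<rho>) < 1"
proof -
  let ?C = "residue_rel `` {x}"
  have C: "?C \<in> {x. absK x \<le> 1} // residue_rel"
    using assms by (auto intro: quotientI)
  define \<rho> where "\<rho> = (SOME y. y \<in> ?C)"
  have "\<rho> \<in> residue_reps"
    unfolding residue_reps_def \<rho>_def using C by (rule imageI)
  moreover have "(x, \<rho>) \<in> residue_rel"
    using some_in_residue_class[OF C] by (simp only: \<rho>_def Image_singleton_iff)
  then have "absK (x - \<rho>) < 1"
    by (simp add: residue_rel_def)
  ultimately show ?thesis
    by blast
qed

lemma q_ge_2: "q \<ge> 2"
proof -
  let ?O = "{x. absK x \<le> 1}"
  have classes: "residue_rel `` {0} \<in> ?O // residue_rel" "residue_rel `` {1} \<in> ?O // residue_rel"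
    by (auto intro!: quotientI)
  have "0 \<in> residue_rel `` {0}" "0 \<notin> residue_rel `` {1}"
    by (auto simp: residue_rel_def)
  then have "card {residue_rel `` {0}, residue_rel `` {1}} = 2"
    by (auto simp: card_insert_if)
  moreover have "card {residue_rel `` {0}, residue_rel `` {1}} \<le> card (?O // residue_rel)"
    using classes residue_field_card by (intro card_mono) auto
  ultimately show ?thesis
    using residue_field_card by simp
qed

lemma q_gt_1: "real q > 1"
  using q_ge_2 by simp

lemma qpow_pos [simp]: "qpow k > 0"
  unfolding qpow_def using q_gt_1 by simp

lemma qpow_not_0 [simp]: "qpow k \<noteq> 0"
  using qpow_pos[of k] by linarith

lemma qpow_nonneg [simp]: "qpow k \<ge> 0"
  using qpow_pos[of k] by linarith

lemma qpow_le_iff [simp]: "qpow j \<le> qpow k \<longleftrightarrow> j \<le> k"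
  unfolding qpow_def using powr_le_cancel_iff[OF q_gt_1] by (metis of_int_le_iff)

lemma qpow_less_iff [simp]: "qpow j < qpow k \<longleftrightarrow> j < k"
  unfolding qpow_def using powr_less_cancel_iff[OF q_gt_1] by (metis of_int_less_iff)

lemma qpow_eq_iff [simp]: "qpow j = qpow k \<longleftrightarrow> j = k"
  by (metis order.eq_iff qpow_le_iff)

lemma qpow_add: "qpow (j + k) = qpow j * qpow k"
  unfolding qpow_def using q_gt_1 by (simp add: powr_add)

lemma qpow_0 [simp]: "qpow 0 = 1"
  unfolding qpow_def using q_gt_1 by simp

lemma qpow_minus: "qpow (- k) = 1 / qpow k"
  unfolding qpow_def using q_gt_1 by (simp add: powr_minus_divide)

lemma qpow_diff: "qpow (j - k) = qpow j / qpow k"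
  using qpow_add[of j "- k"] by (simp add: qpow_minus)

lemma qpow_mult_of_nat: "qpow (int i * k) = qpow k ^ i"
  unfolding qpow_def using q_gt_1 by (simp add: powr_power)

lemma qpow_of_nat: "qpow (int m) = real q ^ m"
  unfolding qpow_def using q_gt_1 by (simp add: powr_realpow)

lemma qpow_powr: "qpow k powr s = real q powr (real_of_int k * s)"
  unfolding qpow_def by (simp add: powr_powr)

lemma absK_le_qpow_of_less_1:
  assumes "absK x < 1"
  shows "absK x \<le> qpow (-1)"
proof (cases "x = 0")
  case False
  then obtain k where k: "absK x = qpow k"
    using absK_eq_qpow by blast
  with assms have "qpow k < qpow 0"
    by (simp only: qpow_0)
  then have "qpow k \<le> qpow (-1)"
    by (simp del: qpow_0)
  then show ?thesis
    using k by simp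
qed simp

lemma normK_eq_qpow:
  assumes "v \<noteq> 0"
  shows "\<exists>k. N v = qpow k"
proof -
  obtain i where i: "N v = absK (v $ i)"
    using normK_attained by blast
  then have "v $ i \<noteq> 0"
    using assms by auto
  then show ?thesis
    using absK_eq_qpow i by auto
qed

lemma UN_kball_qpow: "(\<Union>i. kball 0 (qpow (int i))) = UNIV"
proof (intro equalityI subsetI UNIV_I)
  fix w :: "'k ^ 'n"
  obtain n where "N w < real q ^ n"
    using real_arch_pow[OF q_gt_1] by blast
  then have "w \<in> kball 0 (qpow (int n))"
    by (simp add: kball_def qpow_of_nat)
  then show "w \<in> (\<Union>i. kball 0 (qpow (int i)))"
    by blast
qed

lemma kball_eq_qpow_floor:
  assumes "t > 0"
  shows "kball a t = kball a (qpow \<lfloor>log (real q) t\<rfloor>)"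
proof -
  have "qpow k \<le> t \<longleftrightarrow> k \<le> \<lfloor>log (real q) t\<rfloor>" for k
    unfolding qpow_def using le_log_iff[OF q_gt_1 assms] by (simp add: le_floor_iff)
  then have "N (y - a) \<le> t \<longleftrightarrow> N (y - a) \<le> qpow \<lfloor>log (real q) t\<rfloor>" for y
    using normK_eq_qpow[of "y - a"] assms by (cases "y = a") auto
  then show ?thesis
    by (simp add: kball_def)
qed

definition digit_vectors :: "('k ^ 'n) set" where
  "digit_vectors = {v. \<forall>i. v $ i \<in> residue_reps}"

lemma finite_digit_vectors: "finite (digit_vectors :: ('k ^ 'n) set)"
  and card_digit_vectors: "card (digit_vectors :: ('k ^ 'n) set) = q ^ CARD('n)"
proof -
  have bij: "bij_betw vec_nth (digit_vectors :: ('k ^ 'n) set) (PiE UNIV (\<lambda>_. residue_reps))"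
    by (intro bij_betwI[of _ _ _ vec_lambda]) (auto simp: digit_vectors_def vec_eq_iff PiE_def extensional_def)
  show "finite (digit_vectors :: ('k ^ 'n) set)" "card (digit_vectors :: ('k ^ 'n) set) = q ^ CARD('n)"
    using bij_betw_finite[OF bij] bij_betw_same_card[OF bij] finite_residue_reps card_residue_reps
    by (simp_all add: finite_PiE card_PiE)
qed

lemma normK_digit_vector_le_1: "v \<in> digit_vectors \<Longrightarrow> N v \<le> 1"
  unfolding digit_vectors_def normK_le_iff using residue_reps_le_1 by blast

lemma digit_vectors_cover:
  assumes "N w \<le> 1"
  shows "\<exists>v\<in>digit_vectors. N (w - v) \<le> qpow (-1)"
proof -
  have "\<forall>i. \<exists>\<rho>\<in>residue_reps. absK (w $ i - \<rho>) < 1"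
    using residue_reps_cover assms normK_le_iff by blast
  then obtain f where f: "\<And>i. f i \<in> residue_reps \<and> absK (w $ i - f i) < 1"
    by metis
  then have "(\<chi> i. f i) \<in> digit_vectors" "N (w - (\<chi> i. f i)) \<le> qpow (-1)"
    unfolding digit_vectors_def normK_le_iff using absK_le_qpow_of_less_1 by simp_all
  then show ?thesis
    by blast
qed

lemma digit_vectors_unique:
  assumes "v \<in> digit_vectors" "v' \<in> digit_vectors" "N (v - v') < 1"
  shows "v = v'"
proof -
  have "absK (v $ i - v' $ i) < 1" for i
    using absv_component_le_normK[of "v - v'" i] assms(3) by simp
  then show ?thesis
    using assms(1,2) residue_reps_unique unfolding digit_vectors_def by (simp add: vec_eq_iff)
qed

lemma kball_succ_eq_Union:
  assumes c: "absK c = qpow (k + 1)"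
  shows "kball 0 (qpow (k + 1)) = (\<Union>v\<in>digit_vectors. kball (c *s v) (qpow k))"
proof (intro equalityI subsetI)
  have "c \<noteq> 0"
    using c by auto
  fix w :: "'k ^ 'n" assume "w \<in> kball 0 (qpow (k + 1))"
  then have "N (inverse c *s w) \<le> 1"
    by (simp add: kball_def normK_smult absv_inverse c)
  then obtain v where v: "v \<in> digit_vectors" "N (inverse c *s w - v) \<le> qpow (-1)"
    using digit_vectors_cover by blast
  have "w - c *s v = c *s (inverse c *s w - v)"
    using \<open>c \<noteq> 0\<close> by (simp add: vector_ssub_ldistrib vector_smult_assoc)
  then have "N (w - c *s v) = qpow (k + 1) * N (inverse c *s w - v)"
    by (simp only: normK_smult c)
  also have "\<dots> \<le> qpow (k + 1) * qpow (-1)"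
    using v(2) by (intro mult_left_mono) auto
  also have "\<dots> = qpow k"
    by (simp add: qpow_add[symmetric])
  finally show "w \<in> (\<Union>v\<in>digit_vectors. kball (c *s v) (qpow k))"
    using v(1) by (auto simp: kball_def)
next
  fix w :: "'k ^ 'n" assume "w \<in> (\<Union>v\<in>digit_vectors. kball (c *s v) (qpow k))"
  then obtain v where v: "v \<in> digit_vectors" "N (w - c *s v) \<le> qpow k"
    by (auto simp: kball_def)
  have "N (c *s v) \<le> qpow (k + 1)"
    using normK_digit_vector_le_1[OF v(1)] by (simp add: normK_smult c mult_left_le)
  moreover have "qpow k \<le> qpow (k + 1)"
    by simp
  moreover have "N w \<le> max (N (w - c *s v)) (N (c *s v))"
    using normK_add_le_max[of "w - c *s v" "c *s v"] by simp
  ultimately have "N w \<le> qpow (k + 1)"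
    using v(2) by linarith
  then show "w \<in> kball 0 (qpow (k + 1))"
    by (simp add: kball_def)
qed

lemma kball_succ_disjoint:
  assumes c: "absK c = qpow (k + 1)"
  shows "disjoint_family_on (\<lambda>v. kball (c *s v) (qpow k)) digit_vectors"
  unfolding disjoint_family_on_def
proof (intro ballI impI, rule ccontr)
  fix v v' assume v: "v \<in> digit_vectors" "v' \<in> digit_vectors" "v \<noteq> v'"
    and "kball (c *s v) (qpow k) \<inter> kball (c *s v') (qpow k) \<noteq> {}"
  then obtain w where w: "N (w - c *s v) \<le> qpow k" "N (w - c *s v') \<le> qpow k"
    by (auto simp: kball_def)
  have "N ((w - c *s v') - (w - c *s v)) \<le> qpow k"
    using normK_diff_le_max[of "w - c *s v'" "w - c *s v"] w by linarith
  moreover have "(w - c *s v') - (w - c *s v) = c *s (v - v')"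
    by (simp add: vector_ssub_ldistrib)
  moreover have "qpow k = qpow (k + 1) * qpow (-1)"
    by (simp add: qpow_add[symmetric])
  ultimately have "qpow (k + 1) * N (v - v') \<le> qpow (k + 1) * qpow (-1)"
    by (simp only: normK_smult c)
  then have "N (v - v') \<le> qpow (-1)"
    by (simp only: mult_le_cancel_left_pos[OF qpow_pos])
  moreover have "qpow (-1) < qpow 0"
    by (rule qpow_less_iff[THEN iffD2]) simp
  ultimately have "N (v - v') < 1"
    by (simp only: qpow_0 order.strict_trans1)
  then show False
    using digit_vectors_unique v by blast
qed

end

section \<open>Haar measure of balls and spheres\<close>

locale haar_measure = local_field absK q for absK :: "'k::field \<Rightarrow> real" and q +
  fixes M :: "('k ^ 'n::finite) measure"
  assumes haar: "haar_Kn absK M"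
begin

lemma space_haar [simp]: "space M = UNIV"
  using haar unfolding haar_Kn_def by blast

lemma sets_haar: "sets M = sigma_sets UNIV {kball a r | a r. True}"
  using haar unfolding haar_Kn_def kball_def by blast

lemma emeasure_translate: "A \<in> sets M \<Longrightarrow> emeasure M ((+) a ` A) = emeasure M A"
  using haar unfolding haar_Kn_def by blast

lemma emeasure_unit_kball: "emeasure M (kball 0 1) = 1"
  using haar unfolding haar_Kn_def kball_def by simp

lemma kball_sets [measurable]: "kball a r \<in> sets M"
  unfolding sets_haar by (rule sigma_sets.Basic) blast

lemma singleton_sets [measurable]: "{a} \<in> sets M"
  using kball_sets[of a 0] by (simp only: kball_0)

lemma emeasure_kball_translate: "emeasure M (kball a r) = emeasure M (kball 0 r)"
  using emeasure_translate[OF kball_sets[of 0 r], of a] by (simp only: kball_translate[symmetric])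

lemma emeasure_kball_succ:
  "emeasure M (kball 0 (qpow (k + 1))) = of_nat (q ^ CARD('n)) * emeasure M (kball 0 (qpow k))"
proof -
  obtain c where c: "absK c = qpow (k + 1)"
    using ex_absK_eq_qpow by blast
  have "(\<lambda>v. kball (c *s v) (qpow k)) ` digit_vectors \<subseteq> sets M"
    using kball_sets by blast
  from sum_emeasure[OF this kball_succ_disjoint[OF c] finite_digit_vectors]
  have "emeasure M (kball 0 (qpow (k + 1))) = (\<Sum>v\<in>digit_vectors. emeasure M (kball (c *s v) (qpow k)))"
    unfolding kball_succ_eq_Union[OF c] by simp
  also have "\<dots> = (\<Sum>v\<in>(digit_vectors :: ('k ^ 'n) set). emeasure M (kball 0 (qpow k)))"
    by (rule sum.cong[OF refl emeasure_kball_translate])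
  also have "\<dots> = of_nat (q ^ CARD('n)) * emeasure M (kball 0 (qpow k))"
    using card_digit_vectors[where 'n = 'n] by simp
  finally show ?thesis .
qed

lemma emeasure_kball: "emeasure M (kball a (qpow k)) = ennreal (qpow (int CARD('n) * k))"
proof -
  let ?d = "CARD('n)"
  let ?c = "of_nat (q ^ ?d) :: ennreal"
  have scale: "?c * ennreal (qpow (int ?d * k)) = ennreal (qpow (int ?d * (k + 1)))" for k
  proof -
    have "?c * ennreal (qpow (int ?d * k)) = ennreal (real q ^ ?d * qpow (int ?d * k))"
      by (simp add: ennreal_mult ennreal_of_nat_eq_real_of_nat)
    also have "real q ^ ?d * qpow (int ?d * k) = qpow (int ?d * (k + 1))"
      by (simp add: distrib_left qpow_add qpow_of_nat)
    finally show ?thesis .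
  qed
  have c: "?c \<noteq> 0" "?c \<noteq> \<infinity>"
    using q_ge_2 ennreal_of_nat_neq_top[of "q ^ ?d"] by (simp_all del: of_nat_power)
  have "emeasure M (kball 0 (qpow k)) = ennreal (qpow (int ?d * k))"
  proof (induction k rule: int_induct[where k = 0])
    case base
    then show ?case
      using emeasure_unit_kball by simp
  next
    case (step1 k)
    then show ?case
      using emeasure_kball_succ[of k] scale[of k] by simp
  next
    case (step2 k)
    have "?c * emeasure M (kball 0 (qpow (k - 1))) = ?c * ennreal (qpow (int ?d * (k - 1)))"
      using emeasure_kball_succ[of "k - 1"] scale[of "k - 1"] step2 by simp
    then show ?case
      using c by (simp add: ennreal_mult_cancel_left)
  qed
  then show ?thesis
    using emeasure_kball_translate[of a "qpow k"] by simp
qed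

lemma emeasure_singleton [simp]: "emeasure M {a} = 0"
proof -
  have "emeasure M {a} \<le> 0 + ennreal \<epsilon>" if "\<epsilon> > 0" for \<epsilon>
  proof -
    obtain k0 :: int where "k0 < log (real q) \<epsilon>"
      using ex_of_int_less by blast
    define k where "k = min k0 0"
    have "k < log (real q) \<epsilon>" "k \<le> 0"
      using \<open>k0 < log (real q) \<epsilon>\<close> by (auto simp: k_def)
    then have "real_of_int (int CARD('n) * k) < log (real q) \<epsilon>"
      using mult_right_mono_neg[of 1 "real CARD('n)" "real_of_int k"] by simp
    then have "qpow (int CARD('n) * k) < \<epsilon>"
      unfolding qpow_def using less_log_iff[OF q_gt_1 that] by blast
    have "emeasure M {a} \<le> emeasure M (kball a (qpow k))"
      by (rule emeasure_mono[OF _ kball_sets]) (simp add: kball_def)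
    also have "\<dots> \<le> ennreal \<epsilon>"
      using \<open>qpow (int CARD('n) * k) < \<epsilon>\<close> by (simp add: emeasure_kball ennreal_leI)
    finally show ?thesis
      by simp
  qed
  then have "emeasure M {a} \<le> 0"
    by (rule ennreal_le_epsilon)
  then show ?thesis
    by simp
qed

lemma AE_neq: "AE w in M. w \<noteq> a"
  by (rule AE_I'[of "{a}"]) auto

lemma integral_cong_except_point:
  fixes f g :: "'k ^ 'n \<Rightarrow> 'b::{banach, second_countable_topology}"
  shows "(\<And>w. w \<noteq> a \<Longrightarrow> f w = g w) \<Longrightarrow> integral\<^sup>L M f = integral\<^sup>L M g"
  by (rule integral_discrete_difference[where X = "{a}"]) auto

lemma has_bochner_integral_cong_except_point:
  fixes f g :: "'k ^ 'n \<Rightarrow> 'b::{banach, second_countable_topology}"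
  shows "(\<And>w. w \<noteq> a \<Longrightarrow> f w = g w) \<Longrightarrow> has_bochner_integral M f s \<longleftrightarrow> has_bochner_integral M g s"
  by (rule has_bochner_integral_discrete_difference[where X = "{a}"]) auto

lemma Int_stable_kballs: "Int_stable {kball a r | a r. True}"
  unfolding Int_stable_def using kball_Int by blast

lemma borel_measurable_normK_diff [measurable]: "(\<lambda>w. N (w - a)) \<in> borel_measurable M"
proof -
  have "{w \<in> space M. N (w - a) \<le> t} = kball a t" for t
    by (simp add: kball_def)
  then show ?thesis
    by (simp add: borel_measurable_iff_le)
qed

lemma borel_measurable_normK [measurable]: "N \<in> borel_measurable M"
  using borel_measurable_normK_diff[of 0] by simp

definition ksphere :: "int \<Rightarrow> ('k ^ 'n) set" where
  "ksphere k = {w. N w = qpow k}"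

lemma ksphere_eq_Diff: "ksphere k = kball 0 (qpow k) - kball 0 (qpow (k - 1))"
proof -
  have "N w = qpow k \<longleftrightarrow> N w \<le> qpow k \<and> \<not> N w \<le> qpow (k - 1)" for w
    using normK_eq_qpow[of w] by (cases "w = 0") auto
  then show ?thesis
    by (auto simp: ksphere_def kball_def)
qed

lemma ksphere_sets [measurable]: "ksphere k \<in> sets M"
  unfolding ksphere_eq_Diff by measurable

lemma measure_ksphere: "measure M (ksphere k) = qpow (int CARD('n) * k) * (1 - qpow (- int CARD('n)))"
proof -
  let ?d = "int CARD('n)"
  have "qpow (k - 1) \<le> qpow k"
    by simp
  then have sub: "kball 0 (qpow (k - 1)) \<subseteq> kball 0 (qpow k)"
    by (auto simp: kball_def simp del: qpow_le_iff)
  have "measure M (ksphere k) = measure M (kball 0 (qpow k)) - measure M (kball 0 (qpow (k - 1)))"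
    unfolding ksphere_eq_Diff using sub by (intro measure_Diff) (simp_all add: emeasure_kball)
  also have "\<dots> = qpow (?d * k) - qpow (?d * k - ?d)"
    by (simp add: measure_def emeasure_kball algebra_simps)
  also have "\<dots> = qpow (?d * k) * (1 - qpow (- ?d))"
    using qpow_add[of "?d * k" "- ?d"] by (simp add: algebra_simps)
  finally show ?thesis .
qed

lemma emeasure_ksphere_finite: "emeasure M (ksphere k) \<noteq> \<infinity>"
proof -
  have "emeasure M (ksphere k) \<le> emeasure M (kball 0 (qpow k))"
    by (rule emeasure_mono) (auto simp: ksphere_eq_Diff)
  then show ?thesis
    by (auto simp: emeasure_kball top_unique)
qed

lemma ksphere_disjoint: "j \<noteq> k \<Longrightarrow> ksphere j \<inter> ksphere k = {}"
  unfolding ksphere_def by auto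

lemma ksphere_indicator_series:
  assumes "inj \<sigma>" "w \<in> ksphere (\<sigma> j)"
  shows "(\<lambda>i. \<phi> i * indicator (ksphere (\<sigma> i)) w :: real) = (\<lambda>i. if i = j then \<phi> j else 0)"
proof
  fix i
  show "\<phi> i * indicator (ksphere (\<sigma> i)) w = (if i = j then \<phi> j else 0)"
  proof (cases "i = j")
    case False
    then have "\<sigma> i \<noteq> \<sigma> j"
      using injD[OF assms(1)] by blast
    then have "w \<notin> ksphere (\<sigma> i)"
      using assms(2) ksphere_disjoint by blast
    then show ?thesis
      using False by simp
  qed (use assms(2) in simp)
qed

lemma has_bochner_integral_ksphere_series:
  fixes \<phi> :: "nat \<Rightarrow> real" and \<sigma> :: "nat \<Rightarrow> int"
  assumes inj: "inj \<sigma>" and summable: "summable (\<lambda>i. \<bar>\<phi> i\<bar> * measure M (ksphere (\<sigma> i)))"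
    and on_spheres: "\<And>i w. w \<in> ksphere (\<sigma> i) \<Longrightarrow> F w = \<phi> i"
    and elsewhere: "\<And>w. w \<notin> (\<Union>i. ksphere (\<sigma> i)) \<Longrightarrow> F w = 0"
  shows "has_bochner_integral M F (\<Sum>i. \<phi> i * measure M (ksphere (\<sigma> i)))"
proof -
  define f where "f i w = \<phi> i * indicator (ksphere (\<sigma> i)) w" for i w
  have pointwise: "F w = (\<Sum>i. f i w) \<and> summable (\<lambda>i. norm (f i w))" for w
  proof (cases "\<exists>j. w \<in> ksphere (\<sigma> j)")
    case True
    then obtain j where j: "w \<in> ksphere (\<sigma> j)"
      by blast
    have f_w: "f i w = (if i = j then \<phi> j else 0)" for i
      using fun_cong[OF ksphere_indicator_series[OF inj j, of \<phi>], of i] by (simp add: f_def)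
    have "summable (\<lambda>i. norm (f i w))"
      by (rule summable_finite[of "{j}"]) (simp_all add: f_w)
    then show ?thesis
      using on_spheres[OF j] sums_unique[OF sums_single[of j "\<lambda>_. \<phi> j"]] by (simp add: f_w)
  qed (use elsewhere in \<open>auto simp: f_def\<close>)
  have integrable_f: "integrable M (f i)" for i
    unfolding f_def using emeasure_ksphere_finite
    by (intro integrable_mult_right integrable_real_indicator) (auto simp: less_top[symmetric])
  have "(\<lambda>w. norm (f i w)) = (\<lambda>w. \<bar>\<phi> i\<bar> * indicator (ksphere (\<sigma> i)) w)" for i
    by (auto simp: f_def indicator_def)
  then have summable_norms: "summable (\<lambda>i. \<integral>w. norm (f i w) \<partial>M)"
    using summable by simp
  have summable_pointwise: "AE w in M. summable (\<lambda>i. norm (f i w))"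
    using pointwise by simp
  have "F = (\<lambda>w. \<Sum>i. f i w)"
    using pointwise by blast
  moreover have "integral\<^sup>L M (f i) = \<phi> i * measure M (ksphere (\<sigma> i))" for i
    by (simp add: f_def[abs_def])
  ultimately show ?thesis
    unfolding has_bochner_integral_iff
    using integrable_suminf[OF integrable_f summable_pointwise summable_norms]
      integral_suminf[OF integrable_f summable_pointwise summable_norms]
    by simp
qed

lemma sums_ksphere_weights:
  "(\<lambda>i. qpow (- 2 * int CARD('n) * (k + int i)) * measure M (ksphere (k + int i))) sums qpow (- int CARD('n) * k)"
proof -
  let ?d = "int CARD('n)"
  let ?c = "qpow (- ?d)"
  have c: "0 < ?c" "?c < 1"
    using qpow_less_iff[of "- ?d" 0] by simp_all
  have weight: "qpow (- 2 * ?d * (k + int i)) * measure M (ksphere (k + int i)) = (1 - ?c) * qpow (- ?d * k) * ?c ^ i"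
    for i
  proof -
    have "qpow (- 2 * ?d * (k + int i)) * measure M (ksphere (k + int i))
        = qpow (- 2 * ?d * (k + int i)) * qpow (?d * (k + int i)) * (1 - ?c)"
      by (simp only: measure_ksphere mult.assoc)
    also have "qpow (- 2 * ?d * (k + int i)) * qpow (?d * (k + int i)) = qpow (- ?d * k) * qpow (int i * (- ?d))"
      by (simp only: qpow_add[symmetric]) (simp add: algebra_simps)
    also have "qpow (int i * (- ?d)) = ?c ^ i"
      by (rule qpow_mult_of_nat)
    finally show ?thesis
      by (simp only: ac_simps)
  qed
  have "(\<lambda>i. (1 - ?c) * qpow (- ?d * k) * ?c ^ i) sums ((1 - ?c) * qpow (- ?d * k) * (1 / (1 - ?c)))"
    using c by (intro sums_mult geometric_sums) simp
  then show ?thesis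
    unfolding weight using c by simp
qed

end

section \<open>The Riesz kernel is \<open>\<alpha>\<close>-harmonic away from \<open>0\<close>\<close>

context haar_measure
begin

text \<open>Up to sign, the integrand of \<open>D\<^sup>\<alpha>\<close> applied to the Riesz kernel \<open>\<parallel>w\<parallel>\<^sup>\<alpha>\<^sup>-\<^sup>n\<close> at \<open>x\<close>.\<close>

definition riesz_integrand :: "real \<Rightarrow> 'k ^ 'n \<Rightarrow> 'k ^ 'n \<Rightarrow> real" where
  "riesz_integrand \<alpha> x w =
     (N x powr (\<alpha> - real CARD('n)) - N w powr (\<alpha> - real CARD('n))) / N (x - w) powr (real CARD('n) + \<alpha>)"

text \<open>For \<open>\<parallel>x\<parallel> = q\<^sup>m\<close>, the sphere of radius \<open>q\<^sup>m\<^sup>+\<^sup>1\<^sup>+\<^sup>i\<close> contributes \<open>riesz_term \<alpha> m i\<close> to the integral of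
  \<open>riesz_integrand \<alpha> x\<close>, and the sphere of radius \<open>q\<^sup>m\<^sup>-\<^sup>1\<^sup>-\<^sup>i\<close> contributes its negative.\<close>

definition riesz_term :: "real \<Rightarrow> int \<Rightarrow> nat \<Rightarrow> real" where
  "riesz_term \<alpha> m i = (1 - qpow (- int CARD('n))) *
     (real q powr (- real_of_int m * real CARD('n) - real (Suc i) * \<alpha>) - real q powr (- real_of_int m * real CARD('n) - real (Suc i) * real CARD('n)))"

lemma summable_abs_riesz_term:
  assumes "\<alpha> > 0"
  shows "summable (\<lambda>i. \<bar>riesz_term \<alpha> m i\<bar>)"
proof (rule summable_comparison_test')
  let ?g = "\<lambda>i. real q powr (- real_of_int m * real CARD('n) - real (Suc i) * \<alpha>) + real q powr (- real_of_int m * real CARD('n) - real (Suc i) * real CARD('n))"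
  show "summable ?g"
    using assms q_gt_1 by (intro summable_add summable_powr_linear) auto
  have c: "0 < qpow (- int CARD('n))" "qpow (- int CARD('n)) \<le> 1"
    using qpow_le_iff[of "- int CARD('n)" 0] by simp_all
  show "norm \<bar>riesz_term \<alpha> m i\<bar> \<le> ?g i" for i
  proof -
    let ?A = "real q powr (- real_of_int m * real CARD('n) - real (Suc i) * \<alpha>)"
    let ?B = "real q powr (- real_of_int m * real CARD('n) - real (Suc i) * real CARD('n))"
    have "norm \<bar>riesz_term \<alpha> m i\<bar> = \<bar>1 - qpow (- int CARD('n))\<bar> * \<bar>?A - ?B\<bar>"
      unfolding riesz_term_def by (simp add: abs_mult)
    also have "\<dots> \<le> 1 * (?A + ?B)"
      using c by (intro mult_mono) (auto simp: abs_le_iff)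
    finally show ?thesis
      by simp
  qed
qed

lemma riesz_integrand_eq_qpow:
  assumes "N x = qpow m" "N w = qpow k" "k \<noteq> m"
  shows "riesz_integrand \<alpha> x w
    = (qpow m powr (\<alpha> - real CARD('n)) - qpow k powr (\<alpha> - real CARD('n))) / qpow (max m k) powr (real CARD('n) + \<alpha>)"
proof -
  have "N (x - w) = max (N x) (N w)"
    using assms by (intro normK_diff_eq_max) simp
  also have "\<dots> = qpow (max m k)"
    using assms by (simp add: max_def)
  finally show ?thesis
    using assms by (simp add: riesz_integrand_def)
qed

lemma riesz_term_inside:
  "(qpow m powr (\<alpha> - real CARD('n)) - qpow (m - 1 - int i) powr (\<alpha> - real CARD('n))) / qpow m powr (real CARD('n) + \<alpha>)
     * measure M (ksphere (m - 1 - int i)) = - riesz_term \<alpha> m i"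
proof -
  let ?d = "real CARD('n)" and ?k = "real_of_int (m - 1 - int i)" and ?m = "real_of_int m"
  let ?K = "1 - qpow (- int CARD('n))"
  have meas: "measure M (ksphere (m - 1 - int i)) = real q powr (?k * ?d) * ?K"
    by (simp add: measure_ksphere qpow_def mult.commute)
  have "(qpow m powr (\<alpha> - ?d) - qpow (m - 1 - int i) powr (\<alpha> - ?d)) / qpow m powr (?d + \<alpha>)
      * measure M (ksphere (m - 1 - int i))
      = (real q powr (?m * (\<alpha> - ?d) + ?k * ?d - ?m * (?d + \<alpha>))
         - real q powr (?k * (\<alpha> - ?d) + ?k * ?d - ?m * (?d + \<alpha>))) * ?K"
    unfolding qpow_powr meas by (rule powr_diff_divide_mult) (use q_gt_1 in simp)
  also have "?m * (\<alpha> - ?d) + ?k * ?d - ?m * (?d + \<alpha>) = - ?m * ?d - real (Suc i) * ?d"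
    by (simp add: algebra_simps)
  also have "?k * (\<alpha> - ?d) + ?k * ?d - ?m * (?d + \<alpha>) = - ?m * ?d - real (Suc i) * \<alpha>"
    by (simp add: algebra_simps)
  finally show ?thesis
    by (simp add: riesz_term_def algebra_simps)
qed

lemma riesz_term_outside:
  "(qpow m powr (\<alpha> - real CARD('n)) - qpow (m + 1 + int i) powr (\<alpha> - real CARD('n))) / qpow (m + 1 + int i) powr (real CARD('n) + \<alpha>)
     * measure M (ksphere (m + 1 + int i)) = riesz_term \<alpha> m i"
proof -
  let ?d = "real CARD('n)" and ?k = "real_of_int (m + 1 + int i)" and ?m = "real_of_int m"
  let ?K = "1 - qpow (- int CARD('n))"
  have meas: "measure M (ksphere (m + 1 + int i)) = real q powr (?k * ?d) * ?K"
    by (simp add: measure_ksphere qpow_def mult.commute)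
  have "(qpow m powr (\<alpha> - ?d) - qpow (m + 1 + int i) powr (\<alpha> - ?d)) / qpow (m + 1 + int i) powr (?d + \<alpha>)
      * measure M (ksphere (m + 1 + int i))
      = (real q powr (?m * (\<alpha> - ?d) + ?k * ?d - ?k * (?d + \<alpha>))
         - real q powr (?k * (\<alpha> - ?d) + ?k * ?d - ?k * (?d + \<alpha>))) * ?K"
    unfolding qpow_powr meas by (rule powr_diff_divide_mult) (use q_gt_1 in simp)
  also have "?m * (\<alpha> - ?d) + ?k * ?d - ?k * (?d + \<alpha>) = - ?m * ?d - real (Suc i) * \<alpha>"
    by (simp add: algebra_simps)
  also have "?k * (\<alpha> - ?d) + ?k * ?d - ?k * (?d + \<alpha>) = - ?m * ?d - real (Suc i) * ?d"
    by (simp add: algebra_simps)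
  finally show ?thesis
    by (simp add: riesz_term_def algebra_simps)
qed

lemma has_bochner_integral_riesz_inside:
  assumes x: "N x = qpow m" and "\<alpha> > 0"
  shows "has_bochner_integral M (\<lambda>w. if w \<noteq> 0 \<and> N w < N x then riesz_integrand \<alpha> x w else 0) (\<Sum>i. - riesz_term \<alpha> m i)"
proof -
  let ?\<sigma> = "\<lambda>i. m - 1 - int i"
  let ?\<phi> = "\<lambda>i. (qpow m powr (\<alpha> - real CARD('n)) - qpow (?\<sigma> i) powr (\<alpha> - real CARD('n)))
    / qpow (m) powr (real CARD('n) + \<alpha>)"
  have terms: "?\<phi> i * measure M (ksphere (?\<sigma> i)) = - riesz_term \<alpha> m i" for i
    by (rule riesz_term_inside)
  have "has_bochner_integral M (\<lambda>w. if w \<noteq> 0 \<and> N w < N x then riesz_integrand \<alpha> x w else 0)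
    (\<Sum>i. ?\<phi> i * measure M (ksphere (?\<sigma> i)))"
  proof (rule has_bochner_integral_ksphere_series)
    show "inj ?\<sigma>"
      by (auto simp: inj_def)
    have "\<bar>?\<phi> i\<bar> * measure M (ksphere (?\<sigma> i)) = \<bar>riesz_term \<alpha> m i\<bar>" for i
      using terms[of i] by (metis abs_minus_cancel abs_mult abs_of_nonneg measure_nonneg)
    then show "summable (\<lambda>i. \<bar>?\<phi> i\<bar> * measure M (ksphere (?\<sigma> i)))"
      using summable_abs_riesz_term[OF \<open>\<alpha> > 0\<close>] by simp
    show "(if w \<noteq> 0 \<and> N w < N x then riesz_integrand \<alpha> x w else 0) = ?\<phi> i" if "w \<in> ksphere (?\<sigma> i)" for i w
    proof -
      have w: "N w = qpow (?\<sigma> i)"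
        using that by (simp add: ksphere_def)
      then have "w \<noteq> 0"
        using qpow_pos[of "?\<sigma> i"] by auto
      then show ?thesis
        using w x riesz_integrand_eq_qpow[of x m w "?\<sigma> i" \<alpha>] by (simp add: max_def)
    qed
    show "(if w \<noteq> 0 \<and> N w < N x then riesz_integrand \<alpha> x w else 0) = 0" if "w \<notin> (\<Union>i. ksphere (?\<sigma> i))" for w
    proof (cases "w \<noteq> 0 \<and> N w < N x")
      case True
      then obtain k where k: "N w = qpow k"
        using normK_eq_qpow by blast
      with True x have "w \<in> ksphere (?\<sigma> (nat (m - 1 - k)))"
        by (simp add: ksphere_def)
      with that show ?thesis
        by blast
    qed auto
  qed
  then show ?thesis
    by (simp only: terms)
qed

lemma has_bochner_integral_riesz_outside:
  assumes x: "N x = qpow m" and "\<alpha> > 0"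
  shows "has_bochner_integral M (\<lambda>w. if N x < N w then riesz_integrand \<alpha> x w else 0) (\<Sum>i. riesz_term \<alpha> m i)"
proof -
  let ?\<sigma> = "\<lambda>i. m + 1 + int i"
  let ?\<phi> = "\<lambda>i. (qpow m powr (\<alpha> - real CARD('n)) - qpow (?\<sigma> i) powr (\<alpha> - real CARD('n)))
    / qpow (?\<sigma> i) powr (real CARD('n) + \<alpha>)"
  have terms: "?\<phi> i * measure M (ksphere (?\<sigma> i)) = riesz_term \<alpha> m i" for i
    by (rule riesz_term_outside)
  have "has_bochner_integral M (\<lambda>w. if N x < N w then riesz_integrand \<alpha> x w else 0)
    (\<Sum>i. ?\<phi> i * measure M (ksphere (?\<sigma> i)))"
  proof (rule has_bochner_integral_ksphere_series)
    show "inj ?\<sigma>"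
      by (auto simp: inj_def)
    have "\<bar>?\<phi> i\<bar> * measure M (ksphere (?\<sigma> i)) = \<bar>riesz_term \<alpha> m i\<bar>" for i
      using terms[of i] by (metis abs_minus_cancel abs_mult abs_of_nonneg measure_nonneg)
    then show "summable (\<lambda>i. \<bar>?\<phi> i\<bar> * measure M (ksphere (?\<sigma> i)))"
      using summable_abs_riesz_term[OF \<open>\<alpha> > 0\<close>] by simp
    show "(if N x < N w then riesz_integrand \<alpha> x w else 0) = ?\<phi> i" if "w \<in> ksphere (?\<sigma> i)" for i w
    proof -
      have w: "N w = qpow (?\<sigma> i)"
        using that by (simp add: ksphere_def)
      then have "w \<noteq> 0"
        using qpow_pos[of "?\<sigma> i"] by auto
      then show ?thesis
        using w x riesz_integrand_eq_qpow[of x m w "?\<sigma> i" \<alpha>] by (simp add: max_def)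
    qed
    show "(if N x < N w then riesz_integrand \<alpha> x w else 0) = 0" if "w \<notin> (\<Union>i. ksphere (?\<sigma> i))" for w
    proof (cases "N x < N w")
      case True
      then have "w \<noteq> 0"
        using normK_nonneg[of x] by auto
      then obtain k where k: "N w = qpow k"
        using normK_eq_qpow by blast
      with True x have "w \<in> ksphere (?\<sigma> (nat (k - m - 1)))"
        by (simp add: ksphere_def)
      with that show ?thesis
        by blast
    qed auto
  qed
  then show ?thesis
    by (simp only: terms)
qed

lemma has_bochner_integral_riesz_integrand:
  assumes "x \<noteq> 0" "\<alpha> > 0"
  shows "has_bochner_integral M (riesz_integrand \<alpha> x) 0"
proof -
  obtain m where x: "N x = qpow m"
    using normK_eq_qpow assms(1) by blast
  let ?inside = "\<lambda>w. if w \<noteq> 0 \<and> N w < N x then riesz_integrand \<alpha> x w else 0"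
  let ?outside = "\<lambda>w. if N x < N w then riesz_integrand \<alpha> x w else 0"
  have "summable (riesz_term \<alpha> m)"
    using summable_abs_riesz_term[OF assms(2)] summable_rabs_cancel by blast
  then have "(\<Sum>i. - riesz_term \<alpha> m i) + (\<Sum>i. riesz_term \<alpha> m i) = 0"
    by (simp add: suminf_minus)
  then have "has_bochner_integral M (\<lambda>w. ?inside w + ?outside w) 0"
    using has_bochner_integral_add[OF has_bochner_integral_riesz_inside[OF x assms(2)]
        has_bochner_integral_riesz_outside[OF x assms(2)]]
    by simp
  moreover have "riesz_integrand \<alpha> x w = ?inside w + ?outside w" if "w \<noteq> 0" for w
    using that by (cases "N w = N x") (auto simp: riesz_integrand_def)
  ultimately show ?thesis
    using has_bochner_integral_cong_except_point[of 0 "riesz_integrand \<alpha> x" "\<lambda>w. ?inside w + ?outside w" 0]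
    by blast
qed

end

section \<open>The inversion \<open>J\<close>\<close>

locale canonical_basis = ultrametric_abs absK for absK :: "'k::field \<Rightarrow> real" +
  fixes absL :: "'l::field \<Rightarrow> real" and \<iota> :: "'k \<Rightarrow> 'l" and e :: "'n::finite \<Rightarrow> 'l"
  assumes canonical_basis: "unram_canonical_basis absK absL \<iota> e"
begin

sublocale L: ultrametric_abs absL
  by unfold_locales (use canonical_basis in \<open>simp_all add: unram_canonical_basis_def\<close>)

lemma embed_add: "\<iota> (a + b) = \<iota> a + \<iota> b"
  and embed_mult: "\<iota> (a * b) = \<iota> a * \<iota> b"
  and abs_embed [simp]: "absL (\<iota> a) = absK a"
  and bij_U_map: "bij (U_map \<iota> e)"
  and abs_basis_le_1: "absL (e i) \<le> 1"
  and residues_independent: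
    "(\<forall>i. absK (a' $ i) \<le> 1) \<Longrightarrow> absL (U_map \<iota> e a') < 1 \<Longrightarrow> absK (a' $ i) < 1"
  using canonical_basis unfolding unram_canonical_basis_def U_map_def by simp_all

lemma embed_0 [simp]: "\<iota> 0 = 0"
proof -
  have "\<iota> 0 + \<iota> 0 = \<iota> 0 + 0"
    using embed_add[of 0 0] by simp
  then show ?thesis
    by (rule add_left_imp_eq)
qed

abbreviation U :: "'k ^ 'n \<Rightarrow> 'l" where
  "U \<equiv> U_map \<iota> e"

abbreviation J :: "'k ^ 'n \<Rightarrow> 'k ^ 'n" where
  "J \<equiv> J_map \<iota> e"

lemma U_map_add: "U (x + y) = U x + U y"
  unfolding U_map_def by (simp add: embed_add distrib_right sum.distrib)

lemma U_map_diff: "U (x - y) = U x - U y"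
  using U_map_add[of "x - y" y] by (simp add: eq_diff_eq)

lemma U_map_0 [simp]: "U 0 = 0"
  unfolding U_map_def by simp

lemma U_map_smult: "U (c *s x) = \<iota> c * U x"
  unfolding U_map_def by (simp add: embed_mult sum_distrib_left mult.assoc)

lemma abs_U_map_eq_1:
  assumes y_le: "\<And>i. absK (y $ i) \<le> 1" and y_j: "absK (y $ j) = 1"
  shows "absL (U y) = 1"
proof -
  have "absL (\<iota> (y $ i) * e i) \<le> 1" for i
  proof -
    have "absK (y $ i) * absL (e i) \<le> 1"
      using y_le[of i] L.absv_nonneg[of "e i"] abs_basis_le_1[of i] by (rule mult_le_one)
    then show ?thesis
      by (simp add: L.absv_mult)
  qed
  then have "absL (U y) \<le> 1"
    unfolding U_map_def by (rule L.absv_sum_le[rotated 2]) simp_all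
  moreover have "\<not> absL (U y) < 1"
    using residues_independent[of y j] y_le y_j by auto
  ultimately show ?thesis
    by simp
qed

lemma abs_U_map: "absL (U x) = N x"
proof (cases "x = 0")
  case False
  obtain j where j: "N x = absK (x $ j)"
    using normK_attained[of x] by blast
  with False have xj: "absK (x $ j) > 0"
    using normK_pos[of x] by simp
  then have xj0: "x $ j \<noteq> 0"
    by auto
  define y where "y = inverse (x $ j) *s x"
  have "absK (y $ i) \<le> 1" for i
  proof -
    have "absK (y $ i) = absK (x $ i) / absK (x $ j)"
      by (simp add: y_def absv_mult absv_inverse)
    then show ?thesis
      using absv_component_le_normK[of x i] j xj by simp
  qed
  moreover have "absK (y $ j) = 1"
    using xj0 by (simp add: y_def absv_mult absv_inverse)
  ultimately have Uy: "absL (U y) = 1"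
    by (rule abs_U_map_eq_1)
  have "x = x $ j *s y"
    using xj0 by (simp add: y_def vector_smult_assoc)
  then have "U x = U (x $ j *s y)"
    by (rule arg_cong)
  also have "\<dots> = \<iota> (x $ j) * U y"
    by (rule U_map_smult)
  finally have "absL (U x) = absK (x $ j) * absL (U y)"
    by (simp only: L.absv_mult abs_embed)
  then show ?thesis
    using j Uy by (simp only: mult_1_right)
qed (simp only: U_map_0 L.absv_0 normK_0)

lemma U_map_inj: "U x = U y \<Longrightarrow> x = y"
  using bij_U_map by (meson bij_def injD)

lemma U_map_J_map: "U (J x) = inverse (U x)"
  unfolding J_map_def using bij_U_map by (simp add: bij_def surj_f_inv_f)

lemma J_map_J_map [simp]: "J (J x) = x"
  by (rule U_map_inj) (simp add: U_map_J_map)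

lemma J_map_0 [simp]: "J 0 = 0"
proof -
  have "inv U (U 0) = 0"
    by (rule inv_f_f[OF bij_is_inj[OF bij_U_map]])
  then show ?thesis
    unfolding J_map_def by simp
qed

lemma J_map_eq_0_iff [simp]: "J x = 0 \<longleftrightarrow> x = 0"
  by (metis J_map_J_map J_map_0)

lemma normK_J_map: "N (J x) = 1 / N x"
  using abs_U_map[of "J x"] abs_U_map[of x] by (simp add: U_map_J_map L.absv_inverse)

lemma normK_J_map_diff:
  assumes "x \<noteq> 0" "w \<noteq> 0"
  shows "N (J x - J w) = N (x - w) / (N x * N w)"
proof -
  have "absL (U x) \<noteq> 0" "absL (U w) \<noteq> 0"
    using assms by (simp_all add: abs_U_map)
  then have "U x \<noteq> 0" "U w \<noteq> 0"
    by auto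
  have "U (J x - J w) = inverse (U x) - inverse (U w)"
    by (simp add: U_map_diff U_map_J_map)
  also have "\<dots> = - (inverse (U x) * (U x - U w) * inverse (U w))"
    using \<open>U x \<noteq> 0\<close> \<open>U w \<noteq> 0\<close> by (rule inverse_diff_inverse)
  finally have "absL (U (J x - J w)) = absL (U (x - w)) / (absL (U x) * absL (U w))"
    by (simp add: L.absv_mult L.absv_inverse U_map_diff)
  then show ?thesis
    by (simp only: abs_U_map)
qed

end

section \<open>\<open>J\<close> transports \<open>\<parallel>w\<parallel>\<^sup>-\<^sup>2\<^sup>n dw\<close> to Haar measure\<close>

locale haar_inversion =
  haar_measure absK q M + canonical_basis absK absL \<iota> e
  for absK :: "'k::field \<Rightarrow> real" and q and M :: "('k ^ 'n::finite) measure"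
    and absL :: "'l::field \<Rightarrow> real" and \<iota> and e :: "'n \<Rightarrow> 'l"
begin

lemma J_vimage_kball_far:
  assumes a: "N a = qpow j" and "k < j"
  shows "J -` kball a (qpow k) = kball (J a) (qpow (k - 2 * j))"
proof -
  have a0: "a \<noteq> 0"
    using a by auto
  have NJa: "N (J a) = qpow (- j)"
    by (simp add: normK_J_map a qpow_minus)
  have small: "qpow (k - 2 * j) < qpow (- j)" "qpow k < qpow j"
    using \<open>k < j\<close> by simp_all
  have sq: "qpow j * qpow j = qpow (2 * j)"
    using qpow_add[of j j] by (simp only: mult_2)
  have "N (J w - a) \<le> qpow k \<longleftrightarrow> N (w - J a) \<le> qpow (k - 2 * j)" for w
  proof
    assume h: "N (J w - a) \<le> qpow k"
    have "N (a + (J w - a)) = N a"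
      by (intro normK_add_eq_of_less) (use h small(2) a in linarith)
    then have NJw: "N (J w) = qpow j" and w0: "w \<noteq> 0"
      using a by auto
    have "N (w - J a) = N (J (J w) - J a)"
      by simp
    also have "\<dots> = N (J w - a) / qpow (2 * j)"
      using normK_J_map_diff[of "J w" a] w0 a0 NJw a sq by simp
    also have "\<dots> \<le> qpow k / qpow (2 * j)"
      using h by (simp add: divide_right_mono)
    also have "\<dots> = qpow (k - 2 * j)"
      by (simp add: qpow_diff)
    finally show "N (w - J a) \<le> qpow (k - 2 * j)" .
  next
    assume h: "N (w - J a) \<le> qpow (k - 2 * j)"
    have "N (J a + (w - J a)) = N (J a)"
      by (intro normK_add_eq_of_less) (use h small(1) NJa in linarith)
    then have Nw: "N w = qpow (- j)" and w0: "w \<noteq> 0"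
      using NJa by auto
    have "N (J w - a) = N (J w - J (J a))"
      by simp
    also have "\<dots> = N (w - J a) * qpow (2 * j)"
      using normK_J_map_diff[of w "J a"] w0 a0 Nw NJa sq by (simp add: qpow_minus)
    also have "\<dots> \<le> qpow (k - 2 * j) * qpow (2 * j)"
      using h by (simp add: mult_right_mono)
    also have "\<dots> = qpow k"
      by (simp add: qpow_diff)
    finally show "N (J w - a) \<le> qpow k" .
  qed
  then show ?thesis
    by (auto simp: kball_def)
qed

lemma J_vimage_kball_near:
  assumes "N a \<le> qpow k"
  shows "J -` kball a (qpow k) = {0} \<union> {w. qpow (- k) \<le> N w}"
proof -
  have "0 \<in> kball a (qpow k)"
    using assms by (simp add: kball_def normK_minus_commute[of 0])
  then have ball: "kball a (qpow k) = kball 0 (qpow k)"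
    by (rule kball_recentre)
  have "N (J w) \<le> qpow k \<longleftrightarrow> w = 0 \<or> qpow (- k) \<le> N w" for w
  proof (cases "w = 0")
    case False
    then have "N w > 0"
      by (rule normK_pos)
    then show ?thesis
      using False by (simp add: normK_J_map qpow_minus divide_le_eq field_simps)
  qed simp
  then show ?thesis
    unfolding ball by (auto simp: kball_def)
qed

lemma J_vimage_singleton: "J -` {a} = {J a}"
  by (auto dest: arg_cong[of _ _ J])

lemma kball_radius_cases:
  obtains "kball a r = {}" | "kball a r = {a}" | k where "kball a r = kball a (qpow k)"
  using kball_empty[of r a] kball_0[of a] kball_eq_qpow_floor[of r a] by (metis linorder_neqE)

lemma kball_centre_cases:
  obtains "N a \<le> qpow k" | j where "N a = qpow j" "k < j"
proof (cases "N a \<le> qpow k")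
  case False
  then have "a \<noteq> 0"
    by auto
  then obtain j where "N a = qpow j"
    using normK_eq_qpow by blast
  with False that(2)[of j] show ?thesis
    by simp
qed

lemma sets_normK_ge [measurable]: "{w. t \<le> N w} \<in> sets M"
proof -
  have "{w \<in> space M. t \<le> N w} \<in> sets M"
    by measurable
  then show ?thesis
    by simp
qed

lemma measurable_J [measurable]: "J \<in> measurable M M"
proof (rule measurable_sigma_sets[OF sets_haar])
  fix X :: "('k ^ 'n) set" assume "X \<in> {kball a r | a r. True}"
  then obtain a r where X: "X = kball a r"
    by blast
  have "J -` kball a r \<in> sets M"
  proof (cases a r rule: kball_radius_cases)
    case (3 k)
    then show ?thesis
    proof (cases a k rule: kball_centre_cases)
      case 1
      then show ?thesis
        using 3 sets.Un[OF singleton_sets[of 0] sets_normK_ge[of "qpow (- k)"]]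
        by (simp add: J_vimage_kball_near)
    next
      case (2 j)
      then show ?thesis
        using 3 by (simp add: J_vimage_kball_far)
    qed
  qed (simp_all add: J_vimage_singleton)
  then show "J -` X \<inter> space M \<in> sets M"
    using X by simp
qed auto

definition J_jacobian :: "'k ^ 'n \<Rightarrow> real" where
  "J_jacobian w = N w powr (- 2 * real CARD('n))"

lemma J_jacobian_nonneg: "J_jacobian w \<ge> 0"
  by (simp add: J_jacobian_def)

lemma J_jacobian_measurable [measurable]: "J_jacobian \<in> borel_measurable M"
  unfolding J_jacobian_def by measurable

lemma J_jacobian_eq_qpow: "N w = qpow k \<Longrightarrow> J_jacobian w = qpow (- 2 * int CARD('n) * k)"
  unfolding J_jacobian_def qpow_def using q_gt_1 by (simp add: powr_powr mult_ac)

abbreviation J_density :: "('k ^ 'n) measure" where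
  "J_density \<equiv> density M (\<lambda>w. ennreal (J_jacobian w))"

lemma emeasure_J_density: "A \<in> sets M \<Longrightarrow> emeasure J_density A = (\<integral>\<^sup>+w. ennreal (J_jacobian w * indicator A w) \<partial>M)"
  by (auto simp: emeasure_density intro!: nn_integral_cong split: split_indicator)

lemma emeasure_J_density_kball_far:
  assumes a: "N a = qpow j" and "k < j"
  shows "emeasure J_density (kball (J a) (qpow (k - 2 * j))) = ennreal (qpow (int CARD('n) * k))"
proof -
  let ?d = "int CARD('n)"
  let ?B = "kball (J a) (qpow (k - 2 * j))"
  have NJa: "N (J a) = qpow (- j)"
    by (simp add: normK_J_map a qpow_minus)
  have small: "qpow (k - 2 * j) < qpow (- j)"
    using \<open>k < j\<close> by simp
  have "J_jacobian w = qpow (2 * ?d * j)" if "w \<in> ?B" for w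
  proof -
    have "N (w - J a) \<le> qpow (k - 2 * j)"
      using that by (simp add: kball_def)
    then have "N (J a + (w - J a)) = N (J a)"
      using NJa small by (intro normK_add_eq_of_less) linarith
    then show ?thesis
      using NJa J_jacobian_eq_qpow[of w "- j"] by simp
  qed
  then have "emeasure J_density ?B = (\<integral>\<^sup>+w. ennreal (qpow (2 * ?d * j)) * indicator ?B w \<partial>M)"
    by (auto simp: emeasure_J_density intro!: nn_integral_cong split: split_indicator)
  also have "\<dots> = ennreal (qpow (2 * ?d * j)) * emeasure M ?B"
    by (simp add: nn_integral_cmult_indicator)
  also have "\<dots> = ennreal (qpow (2 * ?d * j) * qpow (?d * (k - 2 * j)))"
    by (simp add: emeasure_kball ennreal_mult)
  also have "qpow (2 * ?d * j) * qpow (?d * (k - 2 * j)) = qpow (?d * k)"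
    by (simp only: qpow_add[symmetric]) (simp add: algebra_simps)
  finally show ?thesis .
qed

lemma emeasure_J_density_outside_kball:
  "emeasure J_density {w. qpow k \<le> N w} = ennreal (qpow (- int CARD('n) * k))"
proof -
  let ?\<phi> = "\<lambda>i. qpow (- 2 * int CARD('n) * (k + int i))"
  define F where "F w = J_jacobian w * indicator {w. qpow k \<le> N w} w" for w
  note sums = sums_ksphere_weights[of k]
  have "has_bochner_integral M F (\<Sum>i. ?\<phi> i * measure M (ksphere (k + int i)))"
  proof (rule has_bochner_integral_ksphere_series)
    show "inj (\<lambda>i. k + int i)"
      by (simp add: inj_def)
    show "summable (\<lambda>i. \<bar>?\<phi> i\<bar> * measure M (ksphere (k + int i)))"
      using sums_summable[OF sums] by simp
    show "F w = ?\<phi> i" if "w \<in> ksphere (k + int i)" for i w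
      using that J_jacobian_eq_qpow[of w "k + int i"] by (simp add: F_def ksphere_def)
    show "F w = 0" if "w \<notin> (\<Union>i. ksphere (k + int i))" for w
    proof (cases "w = 0")
      case False
      then obtain m where m: "N w = qpow m"
        using normK_eq_qpow by blast
      have "\<not> k \<le> m"
      proof
        assume "k \<le> m"
        then have "w \<in> ksphere (k + int (nat (m - k)))"
          using m by (simp add: ksphere_def)
        then show False
          using that by blast
      qed
      then show ?thesis
        using m by (simp add: F_def)
    qed (simp add: F_def J_jacobian_def)
  qed
  then have F: "integrable M F" "integral\<^sup>L M F = qpow (- int CARD('n) * k)"
    using sums_unique[OF sums] by (auto simp: has_bochner_integral_iff)
  have "emeasure J_density {w. qpow k \<le> N w} = (\<integral>\<^sup>+w. ennreal (F w) \<partial>M)"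
    by (simp add: emeasure_J_density F_def)
  also have "\<dots> = ennreal (qpow (- int CARD('n) * k))"
    using F J_jacobian_nonneg by (subst nn_integral_eq_integral) (auto simp: F_def)
  finally show ?thesis .
qed

lemma emeasure_J_density_singleton: "emeasure J_density {p} = 0"
proof -
  have "emeasure J_density {p} = (\<integral>\<^sup>+w. 0 \<partial>M)"
    unfolding emeasure_J_density[OF singleton_sets]
    by (rule nn_integral_cong_AE) (use AE_neq[of p] in \<open>auto elim: AE_mp\<close>)
  then show ?thesis
    by simp
qed

lemma emeasure_J_density_vimage_kball: "emeasure J_density (J -` kball a r) = emeasure M (kball a r)"
proof (cases a r rule: kball_radius_cases)
  case 2
  then show ?thesis
    by (simp add: J_vimage_singleton emeasure_J_density_singleton)
next
  case (3 k)
  then show ?thesis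
  proof (cases a k rule: kball_centre_cases)
    case 1
    have "{0} \<in> null_sets J_density"
      using emeasure_J_density_singleton[of 0] by (simp add: null_sets_def)
    then have "emeasure J_density ({w. qpow (- k) \<le> N w} \<union> {0}) = emeasure J_density {w. qpow (- k) \<le> N w}"
      by (intro emeasure_Un_null_set) simp
    then show ?thesis
      using 1 3 by (simp add: J_vimage_kball_near emeasure_J_density_outside_kball emeasure_kball Un_commute)
  next
    case (2 j)
    then show ?thesis
      using 3 by (simp add: J_vimage_kball_far emeasure_J_density_kball_far emeasure_kball)
  qed
qed simp

lemma measurable_J_density_J: "J \<in> measurable J_density M"
  by (simp add: measurable_cong_sets[OF sets_density refl])

lemma distr_J_density: "distr J_density M J = M"
proof -
  define A where "A i = kball (0 :: 'k ^ 'n) (qpow (int i))" for i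
  have "M = distr J_density M J"
  proof (rule measure_eqI_generator_eq[OF Int_stable_kballs, of UNIV _ _ A])
    show "sets (distr J_density M J) = sigma_sets UNIV {kball a r | a r. True}"
      by (simp add: sets_haar)
    show "range A \<subseteq> {kball a r | a r. True}" "(\<Union>i. A i) = UNIV"
      by (auto simp: A_def UN_kball_qpow)
    show "emeasure M (A i) \<noteq> \<infinity>" for i
      by (simp add: A_def emeasure_kball)
    fix X :: "('k ^ 'n) set" assume "X \<in> {kball a r | a r. True}"
    then show "emeasure M X = emeasure (distr J_density M J) X"
      by (auto simp: emeasure_distr[OF measurable_J_density_J] emeasure_J_density_vimage_kball)
  qed (simp_all add: sets_haar)
  then show ?thesis
    by simp
qed

lemma integral_J_substitution:
  fixes F :: "'k ^ 'n \<Rightarrow> 'b::{banach, second_countable_topology}"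
  assumes [measurable]: "F \<in> borel_measurable M"
  shows "(\<integral>w. F w \<partial>M) = (\<integral>w. J_jacobian w *\<^sub>R F (J w) \<partial>M)"
proof -
  have "(\<integral>w. F w \<partial>M) = (\<integral>w. F w \<partial>distr J_density M J)"
    by (simp add: distr_J_density)
  also have "\<dots> = (\<integral>w. F (J w) \<partial>J_density)"
    by (rule integral_distr[OF measurable_J_density_J]) simp
  also have "\<dots> = (\<integral>w. J_jacobian w *\<^sub>R F (J w) \<partial>M)"
    by (rule integral_density) (auto simp: J_jacobian_nonneg)
  finally show ?thesis .
qed

end

context haar_inversion
begin

lemma kelvin_J_map:
  assumes "x \<noteq> 0"
  shows "kelvin absK \<iota> e \<alpha> u (J x) = of_real (N x powr (real CARD('n) - \<alpha>)) * u x"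
proof -
  have "N (J x) powr (\<alpha> - real CARD('n)) = N x powr (real CARD('n) - \<alpha>)"
    using assms by (simp add: normK_J_map powr_divide powr_minus_divide[symmetric])
  then show ?thesis
    using assms by (simp add: kelvin_def)
qed

lemma kelvin_integrand_J_map:
  assumes "x \<noteq> 0" "w \<noteq> 0"
  shows "J_jacobian w *\<^sub>R ((kelvin absK \<iota> e \<alpha> u (J x) - kelvin absK \<iota> e \<alpha> u (J w))
            / of_real (N (J x - J w) powr (real CARD('n) + \<alpha>)))
    = of_real (N x powr (real CARD('n) + \<alpha>)) * ((u x - u w) / of_real (N (x - w) powr (real CARD('n) + \<alpha>)))
      - of_real (N x powr (2 * real CARD('n))) * u x * of_real (riesz_integrand \<alpha> x w)"
proof (cases "w = x")
  case False
  then have "N (x - w) > 0"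
    by (simp add: normK_pos)
  with assms show ?thesis
    using kelvin_kernel_identity[of "N x" "N w" "N (x - w)" "real CARD('n)" \<alpha> "u x" "u w"]
    by (simp add: normK_pos kelvin_J_map normK_J_map_diff J_jacobian_def riesz_integrand_def)
qed (simp add: riesz_integrand_def)

lemma VT_op_kelvin_J_map:
  assumes x: "x \<noteq> 0" and "\<alpha> > 0" and harmonic: "VT_op absK q M \<alpha> u x = 0"
  shows "VT_op absK q M \<alpha> (kelvin absK \<iota> e \<alpha> u) (J x) = 0"
proof -
  let ?p = "real CARD('n) + \<alpha>"
  let ?Ku = "kelvin absK \<iota> e \<alpha> u"
  define f where "f w = (u x - u w) / of_real (N (x - w) powr ?p)" for w
  define F where "F z = (?Ku (J x) - ?Ku z) / of_real (N (J x - z) powr ?p)" for z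
  have "real q powr (- \<alpha> - real CARD('n)) < real q powr 0"
    using q_gt_1 \<open>\<alpha> > 0\<close> by (intro powr_less_mono) auto
  then have "(real q - 1) / (1 - real q powr (- \<alpha> - real CARD('n))) \<noteq> 0"
    using q_gt_1 \<open>\<alpha> > 0\<close> by simp
  then have f: "integral\<^sup>L M f = 0"
    using harmonic by (simp add: VT_op_def f_def[abs_def])
  have "integral\<^sup>L M F = 0"
  proof (cases "F \<in> borel_measurable M")
    case True
    have "integral\<^sup>L M F = (\<integral>w. J_jacobian w *\<^sub>R F (J w) \<partial>M)"
      using True by (rule integral_J_substitution)
    also have "\<dots> = (\<integral>w. of_real (N x powr ?p) * f w
                       - of_real (N x powr (2 * real CARD('n))) * u x * of_real (riesz_integrand \<alpha> x w) \<partial>M)"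
      by (rule integral_cong_except_point[of 0]) (simp add: F_def f_def kelvin_integrand_J_map x)
    also have "\<dots> = of_real (N x powr ?p) * integral\<^sup>L M f"
      using has_bochner_integral_riesz_integrand[OF x \<open>\<alpha> > 0\<close>]
      by (subst integral_diff_null_integral) (auto simp: has_bochner_integral_iff)
    also have "\<dots> = 0"
      by (simp add: f)
    finally show ?thesis .
  next
    case False
    then have "\<not> integrable M F"
      using borel_measurable_integrable by blast
    then show ?thesis
      by (rule not_integrable_integral_eq)
  qed
  then show ?thesis
    by (simp add: VT_op_def F_def[abs_def])
qed

end

theorem mainTheorem2:
  fixes absK :: "'k::field \<Rightarrow> real" and q :: nat
    and M :: "('k ^ 'n::finite) measure" and chi :: "'k \<Rightarrow> complex"
    and absL :: "'l::field \<Rightarrow> real" and \<iota> :: "'k \<Rightarrow> 'l" and e :: "'n \<Rightarrow> 'l"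
    and \<alpha> :: real and G :: "('k ^ 'n) set" and u :: "'k ^ 'n \<Rightarrow> complex"
  assumes "nonarch_local_field absK q"
    and "haar_Kn absK M"
    and "rank_zero_char absK q chi"
    and "unram_canonical_basis absK absL \<iota> e"
    and "CARD('n) \<ge> 2"
    and "\<alpha> > 0"
    and "0 \<notin> G"
    and "H_infty absK M chi u"
    and "\<forall>x\<in>G. VT_op absK q M \<alpha> u x = 0"
  shows "\<forall>y\<in>J_map \<iota> e ` G. VT_op absK q M \<alpha> (kelvin absK \<iota> e \<alpha> u) y = 0"
proof -
  interpret haar_inversion absK q M absL \<iota> e
    using assms(1,2,4)
    by (intro haar_inversion.intro haar_measure.intro local_field.intro haar_measure_axioms.intro
        canonical_basis.intro canonical_basis_axioms.intro) (auto simp: nonarch_local_field_def ultrametric_abs_def)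
  show ?thesis
  proof
    fix y assume "y \<in> J ` G"
    then obtain x where x: "x \<in> G" "y = J x"
      by blast
    with assms(7) have "x \<noteq> 0"
      by blast
    with x assms(6,9) show "VT_op absK q M \<alpha> (kelvin absK \<iota> e \<alpha> u) y = 0"
      using VT_op_kelvin_J_map by simp
  qed
qed

end
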